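(* Let $D\in\mathbb{N}$ and $r\in\{1,\dots,D\}$. For $\mu>0$ let $Y_\mu\sim \mathrm{Pois}_\mu^{(r,D)}$, and let $U\sim\mathcal{N}_{0,1}^{(r,D)}$. Then $$\lim_{\mu\to\infty}\mathbb{D}[Y_\mu]=\operatorname{Var}(U).$$
   Context: For a parent distribution $f_\theta$ and integers $1\le r\le D$, the order statistic $Z^{(r,D)}$ is the $r$-th smallest of $Z_1,\dots,Z_D\overset{iid}{\sim}f_\theta$; its law is written $f_\theta^{(r,D)}$. $\mathrm{Pois}_\mu^{(r,D)}$ is the law of the $r$-th smallest of $D$ i.i.d. Poisson($\mu$) variables, and $\mathcal{N}_{0,1}^{(r,D)}$ is the law of the $r$-th smallest of $D$ i.i.d. standard normal variables. For a nonnegative random variable $Y$ with positive finite mean, the index of dispersion is $\mathbb{D}[Y]=\operatorname{Var}(Y)/\mathbb{E}[Y]$. *)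

theory Defs
  imports "HOL-Probability.Probability"
begin

definition rth_smallest :: "nat \<Rightarrow> nat \<Rightarrow> (nat \<Rightarrow> real) \<Rightarrow> real" where
  "rth_smallest D r z = sort (map z [0..<D]) ! (r - 1)"

definition order_stat :: "real measure \<Rightarrow> nat \<Rightarrow> nat \<Rightarrow> real measure" where
  "order_stat M D r = distr (PiM {..<D} (\<lambda>_. M)) borel (rth_smallest D r)"

definition pois_law :: "real \<Rightarrow> real measure" where
  "pois_law mu = distr (measure_pmf (poisson_pmf mu)) borel real"

definition std_normal_law :: "real measure" where
  "std_normal_law = density lborel std_normal_density"

definition mean_of :: "real measure \<Rightarrow> real" where
  "mean_of M = (\<integral>y. y \<partial>M)"

definition var_of :: "real measure \<Rightarrow> real" where
  "var_of M = (\<integral>y. (y - mean_of M)\<^sup>2 \<partial>M)"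

definition dispersion :: "real measure \<Rightarrow> real" where
  "dispersion M = var_of M / mean_of M"

end

(*
  Write Y = mu + sqrt mu * Z, where Z is the r-th order statistic of D independent standardized
  Poisson(mu) variables; order statistics commute with increasing affine maps, so
  D[Y] = Var Z / (1 + E Z / sqrt mu).  As mu -> oo the standardized Poisson laws converge weakly
  to N(0,1) (characteristic functions and Levy's continuity theorem).  A Skorohod coupling turns
  this into pointwise convergence of the D components, hence of Z, since the r-th smallest value
  is 1-Lipschitz for the l1 distance.  Finally Z^2 is dominated by the sum of the squared
  components, whose expectation D is independent of mu, so Pratt's lemma yields convergence of
  E Z and E Z^2 to the corresponding moments of U: Var Z -> Var U and E Z / sqrt mu -> 0.
*)
theory Submission
  imports Defs
begin

section \<open>Order statistics of finite families\<close>

lemma sorted_nth_le_iff_card: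
  fixes xs :: "'a::linorder list"
  assumes "sorted xs" "1 \<le> r" "r \<le> length xs"
  shows "xs ! (r - 1) \<le> x \<longleftrightarrow> r \<le> card {j. j < length xs \<and> xs ! j \<le> x}"
proof
  assume le: "xs ! (r - 1) \<le> x"
  have "xs ! j \<le> x" if "j < r" for j
    using sorted_nth_mono[OF assms(1), of j "r - 1"] that assms(2,3) order_trans[OF _ le] by simp
  then have "{..<r} \<subseteq> {j. j < length xs \<and> xs ! j \<le> x}"
    using assms(3) by auto
  from card_mono[OF _ this] show "r \<le> card {j. j < length xs \<and> xs ! j \<le> x}" by simp
next
  assume r: "r \<le> card {j. j < length xs \<and> xs ! j \<le> x}"
  show "xs ! (r - 1) \<le> x"
  proof (rule ccontr)
    assume "\<not> xs ! (r - 1) \<le> x"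
    then have "{j. j < length xs \<and> xs ! j \<le> x} \<subseteq> {..<r - 1}"
      using sorted_nth_mono[OF assms(1), of "r - 1"] by (force simp: not_le)
    from card_mono[OF _ this] r assms(2) show False by simp
  qed
qed

lemma rth_smallest_cong:
  "(\<And>i. i < D \<Longrightarrow> z i = z' i) \<Longrightarrow> rth_smallest D r z = rth_smallest D r z'"
  unfolding rth_smallest_def by (metis map_cong atLeastLessThan_iff set_upt)

lemma rth_smallest_le_iff:
  assumes "1 \<le> r" "r \<le> D"
  shows "rth_smallest D r z \<le> x \<longleftrightarrow> r \<le> card {i. i < D \<and> z i \<le> x}"
proof -
  let ?xs = "map z [0..<D]"
  have "rth_smallest D r z \<le> x \<longleftrightarrow> r \<le> length (filter (\<lambda>v. v \<le> x) (sort ?xs))"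
    unfolding rth_smallest_def using assms
    by (subst sorted_nth_le_iff_card) (auto simp: length_filter_conv_card)
  also have "length (filter (\<lambda>v. v \<le> x) (sort ?xs)) = length (filter (\<lambda>v. v \<le> x) ?xs)"
    by (metis mset_filter mset_sort size_mset)
  also have "\<dots> = card {i. i < D \<and> z i \<le> x}"
    by (simp add: length_filter_conv_card cong: conj_cong)
  finally show ?thesis .
qed

lemma rth_smallest_eqI:
  assumes "1 \<le> r" "r \<le> D" "\<And>x. w \<le> x \<longleftrightarrow> r \<le> card {i. i < D \<and> z i \<le> x}"
  shows "rth_smallest D r z = w"
  using rth_smallest_le_iff[OF assms(1,2), of z] assms(3) order.refl by (meson order.antisym)

lemma rth_smallest_affine:
  fixes a b :: real
  assumes "1 \<le> r" "r \<le> D" "b > 0"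
  shows "rth_smallest D r (\<lambda>i. a + b * z i) = a + b * rth_smallest D r z"
proof (rule rth_smallest_eqI[OF assms(1,2)])
  fix x
  have "a + b * rth_smallest D r z \<le> x \<longleftrightarrow> rth_smallest D r z \<le> (x - a) / b"
    using assms(3) by (simp add: pos_le_divide_eq algebra_simps)
  also have "\<dots> \<longleftrightarrow> r \<le> card {i. i < D \<and> z i \<le> (x - a) / b}"
    by (rule rth_smallest_le_iff[OF assms(1,2)])
  also have "{i. i < D \<and> z i \<le> (x - a) / b} = {i. i < D \<and> a + b * z i \<le> x}"
    using assms(3) by (simp add: pos_le_divide_eq algebra_simps)
  finally show "a + b * rth_smallest D r z \<le> x \<longleftrightarrow> r \<le> card {i. i < D \<and> a + b * z i \<le> x}" .
qed

lemma rth_smallest_mono: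
  assumes "1 \<le> r" "r \<le> D" "\<And>i. i < D \<Longrightarrow> z i \<le> w i"
  shows "rth_smallest D r z \<le> rth_smallest D r w"
proof -
  let ?x = "rth_smallest D r w"
  have "{i. i < D \<and> w i \<le> ?x} \<subseteq> {i. i < D \<and> z i \<le> ?x}"
    using assms(3) by (auto intro: order_trans)
  then have "card {i. i < D \<and> w i \<le> ?x} \<le> card {i. i < D \<and> z i \<le> ?x}"
    by (intro card_mono) auto
  moreover have "r \<le> card {i. i < D \<and> w i \<le> ?x}"
    using rth_smallest_le_iff[OF assms(1,2), of w ?x] by simp
  ultimately show ?thesis
    using rth_smallest_le_iff[OF assms(1,2), of z ?x] by simp
qed

lemma rth_smallest_in_range:
  assumes "1 \<le> r" "r \<le> D"
  shows "\<exists>i<D. rth_smallest D r z = z i"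
proof -
  have "rth_smallest D r z \<in> set (sort (map z [0..<D]))"
    unfolding rth_smallest_def using assms by (intro nth_mem) auto
  then show ?thesis by auto
qed

lemma rth_smallest_sq_le_sum:
  assumes "1 \<le> r" "r \<le> D"
  shows "(rth_smallest D r z)\<^sup>2 \<le> (\<Sum>i<D. (z i)\<^sup>2)"
  using rth_smallest_in_range[OF assms, of z]
  by (auto intro!: member_le_sum[where f="\<lambda>i. (z i)\<^sup>2"])

lemma rth_smallest_dist_le:
  assumes "1 \<le> r" "r \<le> D"
  shows "\<bar>rth_smallest D r z - rth_smallest D r y\<bar> \<le> (\<Sum>i<D. \<bar>z i - y i\<bar>)"
proof -
  define e where "e = (\<Sum>i<D. \<bar>z i - y i\<bar>)"
  have close: "\<bar>z i - y i\<bar> \<le> e" if "i < D" for i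
    unfolding e_def using that by (intro member_le_sum) auto
  have "rth_smallest D r z \<le> rth_smallest D r (\<lambda>i. e + 1 * y i)"
    by (intro rth_smallest_mono[OF assms]) (auto dest!: close simp: abs_le_iff)
  moreover have "rth_smallest D r y \<le> rth_smallest D r (\<lambda>i. e + 1 * z i)"
    by (intro rth_smallest_mono[OF assms]) (auto dest!: close simp: abs_le_iff)
  ultimately show ?thesis
    unfolding e_def[symmetric] rth_smallest_affine[OF assms zero_less_one] by simp
qed

lemma tendsto_rth_smallest:
  assumes "1 \<le> r" "r \<le> D" "\<And>i. i < D \<Longrightarrow> ((\<lambda>n. z n i) \<longlongrightarrow> y i) F"
  shows "((\<lambda>n. rth_smallest D r (z n)) \<longlongrightarrow> rth_smallest D r y) F"
proof -
  have "((\<lambda>n. \<Sum>i<D. \<bar>z n i - y i\<bar>) \<longlongrightarrow> 0) F"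
    using assms(3) by (intro tendsto_null_sum tendsto_rabs_zero) (simp add: LIM_zero)
  then have "((\<lambda>n. rth_smallest D r (z n) - rth_smallest D r y) \<longlongrightarrow> 0) F"
    by (rule Lim_null_comparison[rotated]) (simp add: rth_smallest_dist_le[OF assms(1,2)])
  then show ?thesis by (simp add: LIM_zero_iff)
qed

lemma borel_measurable_rth_smallest:
  assumes "1 \<le> r" "r \<le> D" "sets M = sets borel"
  shows "rth_smallest D r \<in> borel_measurable (PiM {..<D} (\<lambda>_. M))"
proof -
  have "sets (PiM {..<D} (\<lambda>_. M)) = sets (PiM {..<D} (\<lambda>_. borel))"
    using assms(3) by (intro sets_PiM_cong) auto
  moreover have "rth_smallest D r \<in> borel_measurable (PiM {..<D} (\<lambda>_. borel))"
    unfolding borel_measurable_iff_le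
  proof
    fix a :: real
    have count: "r \<le> card {i. i < D \<and> w i \<le> a} \<longleftrightarrow> real r \<le> (\<Sum>i<D. if w i \<le> a then 1 else 0)"
      for w :: "nat \<Rightarrow> real"
    proof -
      have "(\<Sum>i<D. if w i \<le> a then 1 else 0) = real (card ({..<D} \<inter> {i. w i \<le> a}))"
        by (simp add: sum.If_cases)
      also have "{..<D} \<inter> {i. w i \<le> a} = {i. i < D \<and> w i \<le> a}" by auto
      finally show ?thesis by simp
    qed
    have "{w \<in> space (PiM {..<D} (\<lambda>_. borel)). rth_smallest D r w \<le> a}
      = {w \<in> space (PiM {..<D} (\<lambda>_. borel)). real r \<le> (\<Sum>i<D. if w i \<le> a then 1 else 0)}"
      by (simp only: rth_smallest_le_iff[OF assms(1,2)] count)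
    also have "\<dots> \<in> sets (PiM {..<D} (\<lambda>_. borel))" by measurable
    finally show "{w \<in> space (PiM {..<D} (\<lambda>_. borel)). rth_smallest D r w \<le> a} \<in> sets (PiM {..<D} (\<lambda>_. borel))" .
  qed
  ultimately show ?thesis by (metis measurable_cong_sets)
qed

lemma borel_measurable_rth_smallest_components:
  assumes "A \<in> borel_measurable \<Omega>" "1 \<le> r" "r \<le> D"
  shows "(\<lambda>\<omega>. rth_smallest D r (\<lambda>i. A (\<omega> i))) \<in> borel_measurable (PiM {..<D} (\<lambda>_. \<Omega>))"
proof -
  have "compose {..<D} A \<in> measurable (PiM {..<D} (\<lambda>_. \<Omega>)) (PiM {..<D} (\<lambda>_. borel))"
    unfolding compose_def using assms(1) by measurable
  from measurable_comp[OF this borel_measurable_rth_smallest[OF assms(2,3) refl]]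
  show ?thesis
    by (rule measurable_cong[THEN iffD1, rotated])
      (auto simp: compose_def intro!: rth_smallest_cong)
qed

section \<open>Laws of order statistics and their moments\<close>

lemma order_stat_distr:
  assumes "prob_space \<Omega>" "A \<in> borel_measurable \<Omega>" "1 \<le> r" "r \<le> D"
  shows "order_stat (distr \<Omega> borel A) D r
     = distr (PiM {..<D} (\<lambda>_. \<Omega>)) borel (\<lambda>\<omega>. rth_smallest D r (\<lambda>i. A (\<omega> i)))"
proof -
  let ?Q = "distr \<Omega> borel A"
  have A: "A \<in> measurable \<Omega> ?Q"
    using assms(2) measurable_cong_sets[of \<Omega> \<Omega> ?Q borel] by simp
  have comp: "compose {..<D} A \<in> measurable (PiM {..<D} (\<lambda>_. \<Omega>)) (PiM {..<D} (\<lambda>_. ?Q))"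
    unfolding compose_def using A by measurable
  have "PiM {..<D} (\<lambda>_. ?Q) = PiM {..<D} (\<lambda>_. distr \<Omega> ?Q A)"
    by (intro PiM_cong refl distr_cong[symmetric]) auto
  also have "\<dots> = distr (PiM {..<D} (\<lambda>_. \<Omega>)) (PiM {..<D} (\<lambda>_. ?Q)) (compose {..<D} A)"
    using assms(1) A by (intro distr_PiM_finite_prob_space'[symmetric] prob_space.prob_space_distr) auto
  finally have prod: "PiM {..<D} (\<lambda>_. ?Q)
      = distr (PiM {..<D} (\<lambda>_. \<Omega>)) (PiM {..<D} (\<lambda>_. ?Q)) (compose {..<D} A)" .
  have "order_stat ?Q D r
      = distr (PiM {..<D} (\<lambda>_. \<Omega>)) borel (rth_smallest D r \<circ> compose {..<D} A)"
    unfolding order_stat_def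
    by (subst prod) (rule distr_distr[OF borel_measurable_rth_smallest[OF assms(3,4) sets_distr] comp])
  also have "\<dots> = distr (PiM {..<D} (\<lambda>_. \<Omega>)) borel (\<lambda>\<omega>. rth_smallest D r (\<lambda>i. A (\<omega> i)))"
    by (intro distr_cong refl) (auto simp: compose_def intro!: rth_smallest_cong)
  finally show ?thesis .
qed

lemma real_distribution_order_stat:
  assumes "real_distribution M" "1 \<le> r" "r \<le> D"
  shows "real_distribution (order_stat M D r)"
  unfolding order_stat_def using assms
  by (intro prob_space.real_distribution_distr prob_space_PiM borel_measurable_rth_smallest)
    (auto simp: real_distribution_def real_distribution_axioms_def)

lemma order_stat_affine:
  fixes a b :: real
  assumes M: "real_distribution M" and "b > 0" "1 \<le> r" "r \<le> D"
  shows "order_stat (distr M borel (\<lambda>x. a + b * x)) D r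
     = distr (order_stat M D r) borel (\<lambda>x. a + b * x)"
proof -
  interpret real_distribution M by (rule M)
  have rth: "rth_smallest D r \<in> borel_measurable (PiM {..<D} (\<lambda>_. M))"
    using assms by (intro borel_measurable_rth_smallest) auto
  have "order_stat (distr M borel (\<lambda>x. a + b * x)) D r
      = distr (PiM {..<D} (\<lambda>_. M)) borel (\<lambda>\<omega>. rth_smallest D r (\<lambda>i. a + b * \<omega> i))"
    using assms prob_space_axioms by (intro order_stat_distr) auto
  also have "\<dots> = distr (PiM {..<D} (\<lambda>_. M)) borel ((\<lambda>x. a + b * x) \<circ> rth_smallest D r)"
    using assms by (simp add: rth_smallest_affine comp_def)
  also have "\<dots> = distr (order_stat M D r) borel (\<lambda>x. a + b * x)"
    unfolding order_stat_def by (rule distr_distr[symmetric, OF _ rth]) simp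
  finally show ?thesis .
qed

lemma
  fixes h :: "'a \<Rightarrow> 'b::{banach,second_countable_topology}"
  assumes "prob_space M" "i \<in> I" "h \<in> borel_measurable M"
  shows integrable_PiM_component_iff:
      "integrable (PiM I (\<lambda>_. M)) (\<lambda>\<omega>. h (\<omega> i)) \<longleftrightarrow> integrable M h"
    and integral_PiM_component:
      "(\<integral>\<omega>. h (\<omega> i) \<partial>PiM I (\<lambda>_. M)) = (\<integral>x. h x \<partial>M)"
proof -
  have component: "(\<lambda>\<omega>. \<omega> i) \<in> measurable (PiM I (\<lambda>_. M)) M"
    using assms(2) by simp
  have "distr (PiM I (\<lambda>_. M)) M (\<lambda>\<omega>. \<omega> i) = M"
    using assms(1,2) by (rule distr_PiM_component)
  then show "integrable (PiM I (\<lambda>_. M)) (\<lambda>\<omega>. h (\<omega> i)) \<longleftrightarrow> integrable M h"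
    and "(\<integral>\<omega>. h (\<omega> i) \<partial>PiM I (\<lambda>_. M)) = (\<integral>x. h x \<partial>M)"
    using integrable_distr_eq[OF component assms(3)] integral_distr[OF component assms(3)] by simp_all
qed

lemma
  fixes h :: "'a \<Rightarrow> real"
  assumes "prob_space M" "integrable M h"
  shows integrable_PiM_sum_components:
      "integrable (PiM {..<D} (\<lambda>_. M)) (\<lambda>\<omega>. \<Sum>i<D. h (\<omega> i))"
    and integral_PiM_sum_components:
      "(\<integral>\<omega>. (\<Sum>i<D. h (\<omega> i)) \<partial>PiM {..<D} (\<lambda>_. M)) = real D * (\<integral>x. h x \<partial>M)"
proof -
  have h: "h \<in> borel_measurable M"
    using assms(2) by (rule borel_measurable_integrable)
  have component: "integrable (PiM {..<D} (\<lambda>_. M)) (\<lambda>\<omega>. h (\<omega> i))" if "i < D" for i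
    using integrable_PiM_component_iff[OF assms(1) _ h, of i "{..<D}"] that assms(2) by simp
  then show "integrable (PiM {..<D} (\<lambda>_. M)) (\<lambda>\<omega>. \<Sum>i<D. h (\<omega> i))"
    by (intro Bochner_Integration.integrable_sum) simp
  have "(\<integral>\<omega>. (\<Sum>i<D. h (\<omega> i)) \<partial>PiM {..<D} (\<lambda>_. M))
      = (\<Sum>i<D. \<integral>\<omega>. h (\<omega> i) \<partial>PiM {..<D} (\<lambda>_. M))"
    using component by (rule Bochner_Integration.integral_sum) simp
  also have "\<dots> = (\<Sum>i<D. \<integral>x. h x \<partial>M)"
    by (intro sum.cong refl integral_PiM_component[OF assms(1) _ h]) simp
  finally show "(\<integral>\<omega>. (\<Sum>i<D. h (\<omega> i)) \<partial>PiM {..<D} (\<lambda>_. M)) = real D * (\<integral>x. h x \<partial>M)"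
    by simp
qed

lemma integrable_order_stat_square:
  assumes M: "real_distribution M" and "integrable M (\<lambda>x. x\<^sup>2)" "1 \<le> r" "r \<le> D"
  shows "integrable (order_stat M D r) (\<lambda>x. x\<^sup>2)"
proof -
  interpret real_distribution M by (rule M)
  have rth: "rth_smallest D r \<in> borel_measurable (PiM {..<D} (\<lambda>_. M))"
    using assms by (intro borel_measurable_rth_smallest) auto
  have "integrable (PiM {..<D} (\<lambda>_. M)) (\<lambda>\<omega>. (rth_smallest D r \<omega>)\<^sup>2)"
  proof (rule Bochner_Integration.integrable_bound
      [OF integrable_PiM_sum_components[OF prob_space_axioms assms(2)]])
    show "(\<lambda>\<omega>. (rth_smallest D r \<omega>)\<^sup>2) \<in> borel_measurable (PiM {..<D} (\<lambda>_. M))"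
      using rth by measurable
    show "AE \<omega> in PiM {..<D} (\<lambda>_. M). norm ((rth_smallest D r \<omega>)\<^sup>2) \<le> norm (\<Sum>i<D. (\<omega> i)\<^sup>2)"
      using rth_smallest_sq_le_sum[OF assms(3,4)] by (intro AE_I2) (simp add: sum_nonneg)
  qed
  then show ?thesis
    unfolding order_stat_def using rth by (subst integrable_distr_eq) auto
qed

lemma
  fixes a b :: real
  assumes M: "real_distribution M" and "integrable M (\<lambda>x. x)"
  shows mean_of_affine: "mean_of (distr M borel (\<lambda>x. a + b * x)) = a + b * mean_of M"
    and var_of_affine: "var_of (distr M borel (\<lambda>x. a + b * x)) = b\<^sup>2 * var_of M"
proof -
  interpret real_distribution M by (rule M)
  have "mean_of (distr M borel (\<lambda>x. a + b * x)) = (\<integral>x. a + b * x \<partial>M)"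
    unfolding mean_of_def by (rule integral_distr) simp_all
  also have "\<dots> = a + b * mean_of M"
    using assms(2) prob_space by (simp add: mean_of_def)
  finally show mean: "mean_of (distr M borel (\<lambda>x. a + b * x)) = a + b * mean_of M" .
  have "var_of (distr M borel (\<lambda>x. a + b * x)) = (\<integral>x. (a + b * x - (a + b * mean_of M))\<^sup>2 \<partial>M)"
    unfolding var_of_def mean by (rule integral_distr) simp_all
  also have "\<dots> = (\<integral>x. b\<^sup>2 * (x - mean_of M)\<^sup>2 \<partial>M)"
    by (rule Bochner_Integration.integral_cong) (simp_all add: power2_eq_square algebra_simps)
  finally show "var_of (distr M borel (\<lambda>x. a + b * x)) = b\<^sup>2 * var_of M"
    unfolding var_of_def by simp
qed

lemma var_of_eq_moments:
  assumes M: "real_distribution M" and "integrable M (\<lambda>x. x\<^sup>2)"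
  shows "var_of M = (\<integral>x. x\<^sup>2 \<partial>M) - (mean_of M)\<^sup>2"
proof -
  interpret real_distribution M by (rule M)
  have "integrable M (\<lambda>x. x)"
    by (rule square_integrable_imp_integrable[OF _ assms(2)]) measurable
  then show ?thesis
    unfolding var_of_def mean_of_def using assms(2) by (rule variance_eq)
qed

section \<open>Scheffe's and Pratt's lemmas\<close>

lemma Scheffe_lemma_nonneg:
  fixes g :: "nat \<Rightarrow> 'a \<Rightarrow> real"
  assumes int: "\<And>n. integrable M (g n)" "integrable M G"
    and nonneg: "\<And>n. AE x in M. 0 \<le> g n x"
    and lim: "AE x in M. (\<lambda>n. g n x) \<longlonglongrightarrow> G x"
    and lim_integral: "(\<lambda>n. integral\<^sup>L M (g n)) \<longlonglongrightarrow> integral\<^sup>L M G"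
  shows "(\<lambda>n. \<integral>x. \<bar>g n x - G x\<bar> \<partial>M) \<longlonglongrightarrow> 0"
proof -
  have "AE x in M. \<forall>n. 0 \<le> g n x"
    using nonneg by (simp add: AE_all_countable)
  with lim have pos: "AE x in M. (\<forall>n. 0 \<le> g n x) \<and> 0 \<le> G x"
    by eventually_elim (auto intro: LIMSEQ_le_const)
  have "(\<lambda>n. \<integral>x. max 0 (G x - g n x) \<partial>M) \<longlonglongrightarrow> (\<integral>x. 0 \<partial>M)"
  proof (rule integral_dominated_convergence[where w=G])
    show "AE x in M. (\<lambda>n. max 0 (G x - g n x)) \<longlonglongrightarrow> 0"
      using lim
    proof eventually_elim
      case (elim x)
      then have "(\<lambda>n. max 0 (G x - g n x)) \<longlonglongrightarrow> max 0 (G x - G x)"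
        by (intro tendsto_intros)
      then show ?case by simp
    qed
    show "AE x in M. norm (max 0 (G x - g n x)) \<le> G x" for n
      using pos by eventually_elim auto
  qed (use int in auto)
  then have "(\<lambda>n. (integral\<^sup>L M (g n) - integral\<^sup>L M G) + 2 * (\<integral>x. max 0 (G x - g n x) \<partial>M))
      \<longlonglongrightarrow> (integral\<^sup>L M G - integral\<^sup>L M G) + 2 * 0"
    by (intro tendsto_intros lim_integral) simp
  moreover have "(\<integral>x. \<bar>g n x - G x\<bar> \<partial>M)
      = (integral\<^sup>L M (g n) - integral\<^sup>L M G) + 2 * (\<integral>x. max 0 (G x - g n x) \<partial>M)" for n
  proof -
    have "(\<integral>x. \<bar>g n x - G x\<bar> \<partial>M) = (\<integral>x. (g n x - G x) + 2 * max 0 (G x - g n x) \<partial>M)"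
      by (intro Bochner_Integration.integral_cong) (auto simp: abs_if max_def)
    then show ?thesis
      using int by (simp add: Bochner_Integration.integral_diff)
  qed
  ultimately show ?thesis by simp
qed

lemma Pratt_lemma:
  fixes f g :: "nat \<Rightarrow> 'a \<Rightarrow> real"
  assumes [measurable]: "\<And>n. f n \<in> borel_measurable M" "F \<in> borel_measurable M"
    and int: "\<And>n. integrable M (g n)" "integrable M G"
    and bound: "\<And>n. AE x in M. \<bar>f n x\<bar> \<le> g n x"
    and lim_f: "AE x in M. (\<lambda>n. f n x) \<longlonglongrightarrow> F x"
    and lim_g: "AE x in M. (\<lambda>n. g n x) \<longlonglongrightarrow> G x"
    and lim_integral: "(\<lambda>n. integral\<^sup>L M (g n)) \<longlonglongrightarrow> integral\<^sup>L M G"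
  shows "(\<lambda>n. integral\<^sup>L M (f n)) \<longlonglongrightarrow> integral\<^sup>L M F"
proof -
  have [measurable]: "G \<in> borel_measurable M"
    using int(2) by (rule borel_measurable_integrable)
  have bounds: "AE x in M. \<forall>n. \<bar>f n x\<bar> \<le> g n x"
    using bound by (simp add: AE_all_countable)
  with lim_f lim_g have FG: "AE x in M. \<bar>F x\<bar> \<le> G x"
    by eventually_elim (auto intro: tendsto_le[OF sequentially_bot _ tendsto_rabs])
  have int_f: "integrable M (f n)" for n
  proof (rule Bochner_Integration.integrable_bound[OF int(1)[of n]])
    show "AE x in M. norm (f n x) \<le> norm (g n x)"
      using bound[of n] by eventually_elim auto
  qed simp
  have g_nonneg: "AE x in M. 0 \<le> g n x" for n
    using bound[of n] by eventually_elim auto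
  have L1: "(\<lambda>n. \<integral>x. \<bar>g n x - G x\<bar> \<partial>M) \<longlonglongrightarrow> 0"
    by (rule Scheffe_lemma_nonneg[OF int g_nonneg lim_g lim_integral])
  \<comment> \<open>Clipping f n to [-G, G] costs at most |g n - G| and makes dominated convergence applicable.\<close>
  define h where "h n x = max (- G x) (min (G x) (f n x))" for n x
  have [measurable]: "h n \<in> borel_measurable M" for n
    unfolding h_def by measurable
  have h_bound: "AE x in M. norm (h n x) \<le> G x" for n
    using FG by eventually_elim (auto simp: h_def)
  have int_h: "integrable M (h n)" for n
  proof (rule Bochner_Integration.integrable_bound[OF int(2)])
    show "AE x in M. norm (h n x) \<le> norm (G x)"
      using h_bound[of n] by eventually_elim auto
  qed simp
  have lim_h: "(\<lambda>n. integral\<^sup>L M (h n)) \<longlonglongrightarrow> integral\<^sup>L M F"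
  proof (rule integral_dominated_convergence[where w=G])
    show "AE x in M. (\<lambda>n. h n x) \<longlonglongrightarrow> F x"
      using lim_f FG
    proof eventually_elim
      case (elim x)
      then have "(\<lambda>n. h n x) \<longlonglongrightarrow> max (- G x) (min (G x) (F x))"
        unfolding h_def by (intro tendsto_intros)
      moreover have "max (- G x) (min (G x) (F x)) = F x"
        using elim(2) by (simp add: abs_le_iff)
      ultimately show ?case by simp
    qed
  qed (use int h_bound in auto)
  have "norm (integral\<^sup>L M (f n) - integral\<^sup>L M (h n)) \<le> (\<integral>x. \<bar>g n x - G x\<bar> \<partial>M)" for n
  proof -
    have "norm (integral\<^sup>L M (f n) - integral\<^sup>L M (h n)) \<le> (\<integral>x. norm (f n x - h n x) \<partial>M)"
      using int_f int_h by (simp add: integral_norm_bound flip: Bochner_Integration.integral_diff)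
    also have "\<dots> \<le> (\<integral>x. \<bar>g n x - G x\<bar> \<partial>M)"
    proof (rule integral_mono_AE)
      show "AE x in M. norm (f n x - h n x) \<le> \<bar>g n x - G x\<bar>"
        using bounds FG
      proof eventually_elim
        case (elim x)
        then have "\<bar>f n x\<bar> \<le> g n x" "\<bar>F x\<bar> \<le> G x" by simp_all
        then show ?case
          unfolding h_def real_norm_def max_def min_def by (auto simp: abs_le_iff split: abs_split)
      qed
    qed (use int int_f int_h in auto)
    finally show ?thesis .
  qed
  then have "(\<lambda>n. integral\<^sup>L M (f n) - integral\<^sup>L M (h n)) \<longlonglongrightarrow> 0"
    by (intro Lim_null_comparison[OF always_eventually L1]) simp
  from tendsto_add[OF this lim_h] show ?thesis by simp
qed

lemma integral_rth_smallest_tendsto: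
  fixes Y :: "nat \<Rightarrow> 'a \<Rightarrow> real" and X :: "'a \<Rightarrow> real" and f :: "real \<Rightarrow> real"
  assumes \<Omega>: "prob_space \<Omega>" and r: "1 \<le> r" "r \<le> D"
    and [measurable]: "\<And>n. Y n \<in> borel_measurable \<Omega>" "X \<in> borel_measurable \<Omega>"
    and lim: "\<And>\<omega>. \<omega> \<in> space \<Omega> \<Longrightarrow> (\<lambda>n. Y n \<omega>) \<longlonglongrightarrow> X \<omega>"
    and int_sq: "\<And>n. integrable \<Omega> (\<lambda>\<omega>. (Y n \<omega>)\<^sup>2)" "integrable \<Omega> (\<lambda>\<omega>. (X \<omega>)\<^sup>2)"
    and lim_sq: "(\<lambda>n. \<integral>\<omega>. (Y n \<omega>)\<^sup>2 \<partial>\<Omega>) \<longlonglongrightarrow> (\<integral>\<omega>. (X \<omega>)\<^sup>2 \<partial>\<Omega>)"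
    and f: "\<And>x. isCont f x" "\<And>x. \<bar>f x\<bar> \<le> 1 + x\<^sup>2"
  shows "(\<lambda>n. \<integral>\<omega>. f (rth_smallest D r (\<lambda>i. Y n (\<omega> i))) \<partial>PiM {..<D} (\<lambda>_. \<Omega>))
    \<longlonglongrightarrow> (\<integral>\<omega>. f (rth_smallest D r (\<lambda>i. X (\<omega> i))) \<partial>PiM {..<D} (\<lambda>_. \<Omega>))"
proof -
  let ?P = "PiM {..<D} (\<lambda>_. \<Omega>)"
  interpret P: prob_space ?P
    using \<Omega> by (rule prob_space_PiM)
  have [measurable]: "f \<in> borel_measurable borel"
    using f(1) by (intro borel_measurable_continuous_onI continuous_at_imp_continuous_on) simp
  have [measurable]: "(\<lambda>\<omega>. rth_smallest D r (\<lambda>i. A (\<omega> i))) \<in> borel_measurable ?P"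
    if "A \<in> borel_measurable \<Omega>" for A
    using that r by (rule borel_measurable_rth_smallest_components)
  define G where "G A \<omega> = 1 + (\<Sum>i<D. (A (\<omega> i))\<^sup>2)" for A :: "'a \<Rightarrow> real" and \<omega>
  have int_G: "integrable ?P (G A)" "integral\<^sup>L ?P (G A) = 1 + real D * (\<integral>x. (A x)\<^sup>2 \<partial>\<Omega>)"
    if "integrable \<Omega> (\<lambda>x. (A x)\<^sup>2)" for A
    using integrable_PiM_sum_components[OF \<Omega> that] integral_PiM_sum_components[OF \<Omega> that]
    unfolding G_def by (simp_all add: P.prob_space)
  have bound: "\<bar>f (rth_smallest D r (\<lambda>i. A (\<omega> i)))\<bar> \<le> G A \<omega>" for A \<omega>
    using f(2) rth_smallest_sq_le_sum[OF r, of "\<lambda>i. A (\<omega> i)"] unfolding G_def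
    by (meson add_left_mono order_trans)
  have components: "\<omega> i \<in> space \<Omega>" if "\<omega> \<in> space ?P" "i < D" for \<omega> i
    using that by (auto simp: space_PiM)
  show ?thesis
  proof (rule Pratt_lemma[where g="\<lambda>n. G (Y n)" and G="G X"])
    show "AE \<omega> in ?P. (\<lambda>n. f (rth_smallest D r (\<lambda>i. Y n (\<omega> i))))
        \<longlonglongrightarrow> f (rth_smallest D r (\<lambda>i. X (\<omega> i)))"
      by (intro AE_I2 isCont_tendsto_compose[OF f(1)] tendsto_rth_smallest[OF r] lim components)
    show "AE \<omega> in ?P. (\<lambda>n. G (Y n) \<omega>) \<longlonglongrightarrow> G X \<omega>"
      unfolding G_def by (intro AE_I2 tendsto_intros lim components) auto
    show "(\<lambda>n. integral\<^sup>L ?P (G (Y n))) \<longlonglongrightarrow> integral\<^sup>L ?P (G X)"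
      unfolding int_G(2)[OF int_sq(1)] int_G(2)[OF int_sq(2)] by (intro tendsto_intros lim_sq)
  qed (use int_G int_sq bound in auto)
qed

lemma integral_order_stat_tendsto:
  fixes M :: "nat \<Rightarrow> real measure" and f :: "real \<Rightarrow> real"
  assumes M: "\<And>n. real_distribution (M n)" and N: "real_distribution N"
    and weak: "weak_conv_m M N"
    and int_sq: "\<And>n. integrable (M n) (\<lambda>x. x\<^sup>2)" "integrable N (\<lambda>x. x\<^sup>2)"
    and lim_sq: "(\<lambda>n. \<integral>x. x\<^sup>2 \<partial>M n) \<longlonglongrightarrow> (\<integral>x. x\<^sup>2 \<partial>N)"
    and r: "1 \<le> r" "r \<le> D"
    and f: "\<And>x. isCont f x" "\<And>x. \<bar>f x\<bar> \<le> 1 + x\<^sup>2"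
  shows "(\<lambda>n. \<integral>x. f x \<partial>order_stat (M n) D r) \<longlonglongrightarrow> (\<integral>x. f x \<partial>order_stat N D r)"
proof -
  obtain \<Omega> :: "real measure" and Y :: "nat \<Rightarrow> real \<Rightarrow> real" and X :: "real \<Rightarrow> real"
    where \<Omega>: "prob_space \<Omega>" and Y[measurable]: "\<And>n. Y n \<in> borel_measurable \<Omega>"
      and M_eq: "\<And>n. distr \<Omega> borel (Y n) = M n" and X: "X \<in> measurable \<Omega> lborel"
      and N_eq: "distr \<Omega> borel X = N"
      and lim: "\<And>\<omega>. \<omega> \<in> space \<Omega> \<Longrightarrow> (\<lambda>n. Y n \<omega>) \<longlonglongrightarrow> X \<omega>"
    using Skorohod[OF M N weak] by blast
  have X'[measurable]: "X \<in> borel_measurable \<Omega>"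
    using X measurable_cong_sets[OF refl sets_lborel, of \<Omega>] by simp
  have [measurable]: "f \<in> borel_measurable borel"
    using f(1) by (intro borel_measurable_continuous_onI continuous_at_imp_continuous_on) simp
  have moments: "integrable \<Omega> (\<lambda>\<omega>. (A \<omega>)\<^sup>2) \<longleftrightarrow> integrable (distr \<Omega> borel A) (\<lambda>x. x\<^sup>2)"
    "(\<integral>\<omega>. (A \<omega>)\<^sup>2 \<partial>\<Omega>) = (\<integral>x. x\<^sup>2 \<partial>distr \<Omega> borel A)"
    if "A \<in> borel_measurable \<Omega>" for A :: "real \<Rightarrow> real"
    using integrable_distr_eq[OF that, of "\<lambda>x. x\<^sup>2"] integral_distr[OF that, of "\<lambda>x. x\<^sup>2"]
    by simp_all
  have order_stat_integral: "(\<integral>x. f x \<partial>order_stat (distr \<Omega> borel A) D r)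
      = (\<integral>\<omega>. f (rth_smallest D r (\<lambda>i. A (\<omega> i))) \<partial>PiM {..<D} (\<lambda>_. \<Omega>))"
    if "A \<in> borel_measurable \<Omega>" for A
    using that r borel_measurable_rth_smallest_components[OF that r]
    by (simp add: order_stat_distr[OF \<Omega> that r] integral_distr)
  have "(\<lambda>n. \<integral>\<omega>. f (rth_smallest D r (\<lambda>i. Y n (\<omega> i))) \<partial>PiM {..<D} (\<lambda>_. \<Omega>))
    \<longlonglongrightarrow> (\<integral>\<omega>. f (rth_smallest D r (\<lambda>i. X (\<omega> i))) \<partial>PiM {..<D} (\<lambda>_. \<Omega>))"
    using int_sq lim_sq unfolding M_eq[symmetric] N_eq[symmetric]
    by (intro integral_rth_smallest_tendsto[OF \<Omega> r Y X' lim _ _ _ f])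
      (simp_all add: moments[OF Y] moments[OF X'])
  then show ?thesis
    unfolding M_eq[symmetric] N_eq[symmetric] order_stat_integral[OF Y] order_stat_integral[OF X'] .
qed

section \<open>Standardized Poisson laws\<close>

lemma
  fixes p :: "nat pmf" and f :: "nat \<Rightarrow> 'b::{banach,second_countable_topology}"
  assumes "summable (\<lambda>k. norm (pmf p k *\<^sub>R f k))"
  shows integrable_measure_pmf_nat: "integrable (measure_pmf p) f"
    and integral_measure_pmf_nat: "integral\<^sup>L (measure_pmf p) f = (\<Sum>k. pmf p k *\<^sub>R f k)"
proof -
  have "integrable (count_space UNIV) (\<lambda>k. pmf p k *\<^sub>R f k)"
    using assms by (simp add: integrable_count_space_nat_iff)
  then show "integrable (measure_pmf p) f" "integral\<^sup>L (measure_pmf p) f = (\<Sum>k. pmf p k *\<^sub>R f k)"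
    unfolding measure_pmf_eq_density
    by (simp_all add: integrable_density integral_density integral_count_space_nat)
qed

lemma pmf_poisson_Suc:
  assumes "0 < mu"
  shows "pmf (poisson_pmf mu) (Suc k) * real (Suc k) = mu * pmf (poisson_pmf mu) k"
  using assms by (simp add: fact_Suc field_simps del: of_nat_Suc)

lemma sums_pmf_poisson:
  assumes "0 < mu"
  shows "(\<lambda>k. pmf (poisson_pmf mu) k) sums 1"
proof -
  have "(\<lambda>k. mu ^ k /\<^sub>R fact k * exp (-mu)) sums (exp mu * exp (-mu))"
    by (intro sums_mult2 exp_converges)
  then show ?thesis using assms by (simp add: exp_minus field_simps)
qed

lemma sums_pmf_poisson_mean:
  assumes "0 < mu"
  shows "(\<lambda>k. pmf (poisson_pmf mu) k * real k) sums mu"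
proof -
  have "(\<lambda>k. pmf (poisson_pmf mu) (Suc k) * real (Suc k)) sums (mu * 1)"
    unfolding pmf_poisson_Suc[OF assms] by (intro sums_mult sums_pmf_poisson assms)
  then show ?thesis by (subst (asm) sums_Suc_iff) simp
qed

lemma sums_pmf_poisson_second_moment:
  assumes "0 < mu"
  shows "(\<lambda>k. pmf (poisson_pmf mu) k * (real k)\<^sup>2) sums (mu\<^sup>2 + mu)"
proof -
  have "pmf (poisson_pmf mu) (Suc k) * (real (Suc k))\<^sup>2
      = mu * (pmf (poisson_pmf mu) k * real k + pmf (poisson_pmf mu) k)" for k
  proof -
    have "pmf (poisson_pmf mu) (Suc k) * (real (Suc k))\<^sup>2
        = (pmf (poisson_pmf mu) (Suc k) * real (Suc k)) * real (Suc k)"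
      by (simp add: power2_eq_square)
    then show ?thesis
      unfolding pmf_poisson_Suc[OF assms] by (simp add: algebra_simps)
  qed
  moreover have "(\<lambda>k. mu * (pmf (poisson_pmf mu) k * real k + pmf (poisson_pmf mu) k)) sums (mu * (mu + 1))"
    by (intro sums_mult sums_add sums_pmf_poisson sums_pmf_poisson_mean assms)
  ultimately have "(\<lambda>k. pmf (poisson_pmf mu) (Suc k) * (real (Suc k))\<^sup>2) sums (mu\<^sup>2 + mu)"
    by (simp add: algebra_simps power2_eq_square)
  then show ?thesis by (subst (asm) sums_Suc_iff) simp
qed

definition standardized_poisson :: "real \<Rightarrow> real measure" where
  "standardized_poisson mu = distr (measure_pmf (poisson_pmf mu)) borel (\<lambda>k. (real k - mu) / sqrt mu)"

lemma real_distribution_standardized_poisson: "real_distribution (standardized_poisson mu)"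
  unfolding standardized_poisson_def
  by (intro prob_space.real_distribution_distr prob_space_measure_pmf) simp

lemma pois_law_eq_standardized_poisson:
  assumes "0 < mu"
  shows "pois_law mu = distr (standardized_poisson mu) borel (\<lambda>z. mu + sqrt mu * z)"
  unfolding pois_law_def standardized_poisson_def using assms
  by (subst distr_distr) (auto intro!: distr_cong simp: comp_def)

lemma
  assumes "0 < mu"
  shows integrable_standardized_poisson_square: "integrable (standardized_poisson mu) (\<lambda>z. z\<^sup>2)"
    and integral_standardized_poisson_square: "(\<integral>z. z\<^sup>2 \<partial>standardized_poisson mu) = 1"
proof -
  let ?p = "pmf (poisson_pmf mu)"
  have "(\<lambda>k. (?p k * (real k)\<^sup>2 - 2 * mu * (?p k * real k) + mu\<^sup>2 * ?p k) / mu)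
      sums ((mu\<^sup>2 + mu - 2 * mu * mu + mu\<^sup>2 * 1) / mu)"
    by (intro sums_divide sums_add sums_diff sums_mult sums_pmf_poisson sums_pmf_poisson_mean
        sums_pmf_poisson_second_moment assms)
  moreover have "(mu\<^sup>2 + mu - 2 * mu * mu + mu\<^sup>2 * 1) / mu = 1"
    using assms by (simp add: field_simps power2_eq_square)
  moreover have "(?p k * (real k)\<^sup>2 - 2 * mu * (?p k * real k) + mu\<^sup>2 * ?p k) / mu
      = ?p k *\<^sub>R ((real k - mu) / sqrt mu)\<^sup>2" for k
    using assms by (simp add: field_simps power2_eq_square)
  ultimately have sums: "(\<lambda>k. ?p k *\<^sub>R ((real k - mu) / sqrt mu)\<^sup>2) sums 1"
    by simp
  then have summable: "summable (\<lambda>k. norm (?p k *\<^sub>R ((real k - mu) / sqrt mu)\<^sup>2))"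
    by (simp add: sums_iff abs_mult)
  show "integrable (standardized_poisson mu) (\<lambda>z. z\<^sup>2)"
    unfolding standardized_poisson_def
    by (subst integrable_distr_eq) (auto intro: integrable_measure_pmf_nat[OF summable])
  show "(\<integral>z. z\<^sup>2 \<partial>standardized_poisson mu) = 1"
    unfolding standardized_poisson_def
    using integral_measure_pmf_nat[OF summable] sums by (subst integral_distr) (auto simp: sums_iff)
qed

lemma char_standardized_poisson:
  assumes "0 < mu"
  shows "char (standardized_poisson mu) t
    = exp (of_real mu * (iexp (t / sqrt mu) - 1 - \<i> * of_real (t / sqrt mu)))"
proof -
  let ?p = "pmf (poisson_pmf mu)"
  define s where "s = t / sqrt mu"
  define c where "c = of_real (exp (-mu)) * exp (- (\<i> * of_real (s * mu)))"
  have summand: "?p k *\<^sub>R iexp (t * ((real k - mu) / sqrt mu)) = c * ((of_real mu * iexp s) ^ k /\<^sub>R fact k)"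
    for k
  proof -
    have "\<i> * complex_of_real (t * ((real k - mu) / sqrt mu))
        = of_nat k * (\<i> * of_real s) + (- (\<i> * of_real (s * mu)))"
      using assms unfolding s_def by (simp add: field_simps)
    then have "iexp (t * ((real k - mu) / sqrt mu)) = iexp s ^ k * exp (- (\<i> * of_real (s * mu)))"
      by (simp only: exp_add exp_of_nat_mult)
    then show ?thesis using assms
      by (simp add: c_def scaleR_conv_of_real power_mult_distrib field_simps)
  qed
  have "(\<lambda>k. c * ((of_real mu * iexp s) ^ k /\<^sub>R fact k)) sums (c * exp (of_real mu * iexp s))"
    by (intro sums_mult exp_converges)
  then have sums: "(\<lambda>k. ?p k *\<^sub>R iexp (t * ((real k - mu) / sqrt mu))) sums (c * exp (of_real mu * iexp s))"
    unfolding summand .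
  have "summable (\<lambda>k. norm (?p k *\<^sub>R iexp (t * ((real k - mu) / sqrt mu))))"
    using sums_pmf_poisson[OF assms] by (simp add: norm_mult sums_iff)
  then have "char (standardized_poisson mu) t = (\<Sum>k. ?p k *\<^sub>R iexp (t * ((real k - mu) / sqrt mu)))"
    unfolding char_def standardized_poisson_def
    by (subst integral_distr) (auto simp: integral_measure_pmf_nat)
  also have "\<dots> = c * exp (of_real mu * iexp s)"
    using sums by (simp add: sums_iff)
  also have "\<dots> = exp (of_real mu * (iexp s - 1 - \<i> * of_real s))"
    unfolding c_def by (simp add: exp_of_real[symmetric] exp_add[symmetric] exp_minus[symmetric] algebra_simps)
  finally show ?thesis unfolding s_def .
qed

lemma norm_poisson_char_exponent_le:
  assumes "0 < mu"
  shows "norm (of_real mu * (iexp (t / sqrt mu) - 1 - \<i> * of_real (t / sqrt mu)) + of_real (t\<^sup>2 / 2))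
    \<le> \<bar>t\<bar> ^ 3 / 6 / sqrt mu"
proof -
  define s where "s = t / sqrt mu"
  have "mu * s\<^sup>2 = t\<^sup>2"
    using assms unfolding s_def by (simp add: power_divide)
  then have mu_s: "of_real mu * (of_real s)\<^sup>2 = (of_real (t\<^sup>2) :: complex)"
    by (metis of_real_mult of_real_power)
  have taylor2: "(\<Sum>k\<le>2. (\<i> * of_real s) ^ k / fact k) = 1 + \<i> * of_real s - (of_real s)\<^sup>2 / (2 :: complex)"
    by (simp add: eval_nat_numeral power2_eq_square algebra_simps)
  have "of_real mu * (iexp s - 1 - \<i> * of_real s) + of_real (t\<^sup>2 / 2)
      = of_real mu * (iexp s - (\<Sum>k\<le>2. (\<i> * of_real s) ^ k / fact k))"
    unfolding taylor2 using mu_s by (simp add: algebra_simps)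
  then have "norm (of_real mu * (iexp s - 1 - \<i> * of_real s) + of_real (t\<^sup>2 / 2))
      = mu * norm (iexp s - (\<Sum>k\<le>2. (\<i> * of_real s) ^ k / fact k))"
    using assms by (simp add: norm_mult)
  also have "\<dots> \<le> mu * (\<bar>s\<bar> ^ 3 / 6)"
  proof (rule mult_left_mono)
    have "fact (Suc 2) = (6::real)"
      by (simp add: eval_nat_numeral)
    then show "norm (iexp s - (\<Sum>k\<le>2. (\<i> * of_real s) ^ k / fact k)) \<le> \<bar>s\<bar> ^ 3 / 6"
      using iexp_approx1[of s 2] by (simp add: eval_nat_numeral)
  qed (use assms in simp)
  also have "mu * (\<bar>s\<bar> ^ 3 / 6) = \<bar>t\<bar> ^ 3 / 6 / sqrt mu"
  proof -
    have "sqrt mu ^ 3 = mu * sqrt mu"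
      using assms by (simp add: power3_eq_cube)
    then show ?thesis
      unfolding s_def abs_divide power_divide using assms by (simp add: field_simps)
  qed
  finally show ?thesis unfolding s_def .
qed

lemma weak_conv_standardized_poisson:
  fixes mu :: "nat \<Rightarrow> real"
  assumes pos: "\<And>n. 0 < mu n" and lim: "filterlim mu at_top sequentially"
  shows "weak_conv_m (\<lambda>n. standardized_poisson (mu n)) std_normal_distribution"
proof (rule levy_continuity[OF real_distribution_standardized_poisson real_dist_normal_dist])
  fix t
  define e where "e n = of_real (mu n) * (iexp (t / sqrt (mu n)) - 1 - \<i> * of_real (t / sqrt (mu n)))" for n
  have "\<forall>n. norm (e n + of_real (t\<^sup>2 / 2)) \<le> \<bar>t\<bar> ^ 3 / 6 / sqrt (mu n)"
    unfolding e_def by (intro allI norm_poisson_char_exponent_le pos)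
  moreover have "(\<lambda>n. \<bar>t\<bar> ^ 3 / 6 / sqrt (mu n)) \<longlonglongrightarrow> 0"
    by (rule tendsto_divide_0[OF tendsto_const
          filterlim_at_top_imp_at_infinity[OF filterlim_compose[OF sqrt_at_top lim]]])
  ultimately have "(\<lambda>n. e n + of_real (t\<^sup>2 / 2)) \<longlonglongrightarrow> 0"
    by (rule Lim_null_comparison[OF always_eventually])
  from tendsto_exp[OF tendsto_diff[OF this tendsto_const[of "of_real (t\<^sup>2 / 2)"]]]
  have "(\<lambda>n. exp (e n)) \<longlonglongrightarrow> exp (of_real (- t\<^sup>2 / 2))"
    by simp
  then show "(\<lambda>n. char (standardized_poisson (mu n)) t) \<longlonglongrightarrow> char std_normal_distribution t"
    unfolding e_def char_standardized_poisson[OF pos] char_std_normal_distribution exp_of_real .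
qed

lemma abs_le_one_plus_square: "\<bar>x :: real\<bar> \<le> 1 + x\<^sup>2"
proof (cases "\<bar>x\<bar> \<le> 1")
  case False
  then have "\<bar>x\<bar> * 1 \<le> \<bar>x\<bar> * \<bar>x\<bar>"
    by (intro mult_left_mono) auto
  then show ?thesis by (simp add: power2_eq_square)
qed (simp add: add_increasing2)

lemma dispersion_order_stat_pois_law:
  assumes "0 < mu" "1 \<le> r" "r \<le> D"
  defines "S \<equiv> order_stat (standardized_poisson mu) D r"
  shows "dispersion (order_stat (pois_law mu) D r) = var_of S / (1 + mean_of S / sqrt mu)"
proof -
  have S: "real_distribution S"
    unfolding S_def using assms by (intro real_distribution_order_stat real_distribution_standardized_poisson)
  then interpret S: real_distribution S .
  have "integrable S (\<lambda>x. x\<^sup>2)"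
    unfolding S_def using assms
    by (intro integrable_order_stat_square real_distribution_standardized_poisson
        integrable_standardized_poisson_square)
  then have int: "integrable S (\<lambda>x. x)"
    by (rule S.square_integrable_imp_integrable[rotated]) measurable
  have "order_stat (pois_law mu) D r = distr S borel (\<lambda>x. mu + sqrt mu * x)"
    unfolding S_def pois_law_eq_standardized_poisson[OF assms(1)] using assms
    by (intro order_stat_affine real_distribution_standardized_poisson) auto
  then have "dispersion (order_stat (pois_law mu) D r) = mu * var_of S / (mu + sqrt mu * mean_of S)"
    unfolding dispersion_def using assms(1) by (simp add: mean_of_affine[OF S int] var_of_affine[OF S int])
  also have "mu + sqrt mu * mean_of S = mu * (1 + mean_of S / sqrt mu)"
    using assms(1) by (simp add: field_simps)
  finally show ?thesis
    using assms(1) by simp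
qed

lemma tendsto_dispersion_order_stat_pois_law:
  fixes mu :: "nat \<Rightarrow> real"
  assumes r: "1 \<le> r" "r \<le> D" and pos: "\<And>n. 0 < mu n" and lim: "filterlim mu at_top sequentially"
  shows "(\<lambda>n. dispersion (order_stat (pois_law (mu n)) D r)) \<longlonglongrightarrow> var_of (order_stat std_normal_law D r)"
proof -
  define S where "S n = order_stat (standardized_poisson (mu n)) D r" for n
  define N where "N = order_stat std_normal_distribution D r"
  have S: "real_distribution (S n)" "integrable (S n) (\<lambda>x. x\<^sup>2)" for n
    unfolding S_def using r pos
    by (auto intro!: real_distribution_order_stat integrable_order_stat_square
        real_distribution_standardized_poisson integrable_standardized_poisson_square)
  have N: "real_distribution N" "integrable N (\<lambda>x. x\<^sup>2)"
    unfolding N_def using r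
    by (auto intro!: real_distribution_order_stat integrable_order_stat_square
        real_dist_normal_dist integrable_std_normal_distribution_moment)
  have integral_S: "(\<lambda>n. \<integral>x. f x \<partial>S n) \<longlonglongrightarrow> (\<integral>x. f x \<partial>N)"
    if "\<And>x. isCont f x" "\<And>x. \<bar>f x\<bar> \<le> 1 + x\<^sup>2" for f
    unfolding S_def N_def
  proof (rule integral_order_stat_tendsto[OF real_distribution_standardized_poisson real_dist_normal_dist
        weak_conv_standardized_poisson[OF pos lim] integrable_standardized_poisson_square[OF pos]
        integrable_std_normal_distribution_moment _ r that])
    show "(\<lambda>n. \<integral>x. x\<^sup>2 \<partial>standardized_poisson (mu n)) \<longlonglongrightarrow> (\<integral>x. x\<^sup>2 \<partial>std_normal_distribution)"
      using std_normal_distribution_even_moments(1)[of 1]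
      by (simp add: integral_standardized_poisson_square[OF pos])
  qed
  have mean: "(\<lambda>n. mean_of (S n)) \<longlonglongrightarrow> mean_of N"
    unfolding mean_of_def by (rule integral_S) (simp_all add: abs_le_one_plus_square)
  have "(\<lambda>n. (\<integral>x. x\<^sup>2 \<partial>S n) - (mean_of (S n))\<^sup>2) \<longlonglongrightarrow> (\<integral>x. x\<^sup>2 \<partial>N) - (mean_of N)\<^sup>2"
    by (intro tendsto_intros integral_S mean) auto
  then have var: "(\<lambda>n. var_of (S n)) \<longlonglongrightarrow> var_of N"
    using S N by (simp add: var_of_eq_moments)
  have inv_sqrt: "(\<lambda>n. 1 / sqrt (mu n)) \<longlonglongrightarrow> 0"
    by (rule tendsto_divide_0[OF tendsto_const
          filterlim_at_top_imp_at_infinity[OF filterlim_compose[OF sqrt_at_top lim]]])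
  have "(\<lambda>n. var_of (S n) / (1 + mean_of (S n) * (1 / sqrt (mu n)))) \<longlonglongrightarrow> var_of N / (1 + mean_of N * 0)"
    by (rule tendsto_divide[OF var tendsto_add[OF tendsto_const tendsto_mult[OF mean inv_sqrt]]]) simp
  then show ?thesis
    unfolding std_normal_law_def N_def S_def by (simp add: dispersion_order_stat_pois_law[OF pos r])
qed

theorem mainTheorem1:
  fixes D r :: nat
  assumes "1 \<le> r" and "r \<le> D"
  shows "((\<lambda>mu. dispersion (order_stat (pois_law mu) D r))
           \<longlongrightarrow> var_of (order_stat std_normal_law D r)) at_top"
proof (rule tendsto_at_topI_sequentially)
  fix X :: "nat \<Rightarrow> real"
  assume X: "filterlim X at_top sequentially"
  have X_ge_1: "\<forall>\<^sub>F n in sequentially. 1 \<le> X n"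
    using X by (simp add: filterlim_at_top)
  define mu where "mu n = max (X n) 1" for n
  have "filterlim mu at_top sequentially"
    by (rule filterlim_at_top_mono[OF X]) (simp add: mu_def)
  then have "(\<lambda>n. dispersion (order_stat (pois_law (mu n)) D r)) \<longlonglongrightarrow> var_of (order_stat std_normal_law D r)"
    by (rule tendsto_dispersion_order_stat_pois_law[OF assms, rotated]) (simp add: mu_def)
  moreover from X_ge_1 have "\<forall>\<^sub>F n in sequentially.
      dispersion (order_stat (pois_law (mu n)) D r) = dispersion (order_stat (pois_law (X n)) D r)"
    by eventually_elim (simp add: mu_def)
  ultimately show "(\<lambda>n. dispersion (order_stat (pois_law (X n)) D r)) \<longlonglongrightarrow> var_of (order_stat std_normal_law D r)"
    by (rule Lim_transform_eventually)
qed

end
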